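(* Assume CH. Let $\mathcal{I}$ be a $\sigma$-ideal on $\mathbb{R}$ satisfying the standing assumptions, and let $n\geq 1$ be an integer. Then there exists an $\mathcal{I}$-Luzin set $L\subseteq\mathbb{R}$ such that the $n$-fold Minkowski sum $\bigoplus^{n}L=\underbrace{L+\cdots+L}_{n}$ is an $\mathcal{I}$-Luzin set and $\bigoplus^{n+1}L=\mathbb{R}$.
   Context: Standing assumptions on $\mathcal{I}$: $\mathcal{I}$ is a $\sigma$-ideal of subsets of $\mathbb{R}$ such that $\mathbb{R}\notin\mathcal{I}$; $x+I\in\mathcal{I}$ and $xI\in\mathcal{I}$ for all $x\in\mathbb{R}$, $I\in\mathcal{I}$; every member of $\mathcal{I}$ is contained in a Borel member of $\mathcal{I}$; and for all Borel $A,B\notin\mathcal{I}$ the set $A-B$ has nonempty interior. A set $L\subseteq\mathbb{R}$ is $\mathcal{I}$-Luzin if $|L|=\mathfrak{c}$ and $L\cap I$ is countable for every $I\in\mathcal{I}$. Minkowski sum: $A+B=\{a+b:a\in A,b\in B\}$. *)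

theory Defs
  imports "HOL-Analysis.Analysis" "HOL-Library.Equipollence"
begin

definition CH :: bool where
  "CH \<longleftrightarrow> (\<forall>A :: real set. countable A \<or> A \<approx> (UNIV :: real set))"

definition sigma_ideal :: "real set set \<Rightarrow> bool" where
  "sigma_ideal \<I> \<longleftrightarrow>
     {} \<in> \<I> \<and>
     (\<forall>A B. A \<in> \<I> \<longrightarrow> B \<subseteq> A \<longrightarrow> B \<in> \<I>) \<and>
     (\<forall>F. countable F \<longrightarrow> F \<subseteq> \<I> \<longrightarrow> \<Union>F \<in> \<I>)"

definition standing_ideal :: "real set set \<Rightarrow> bool" where
  "standing_ideal \<I> \<longleftrightarrow>
     sigma_ideal \<I> \<and>
     (UNIV :: real set) \<notin> \<I> \<and>
     (\<forall>x. \<forall>I\<in>\<I>. (\<lambda>y. x + y) ` I \<in> \<I> \<and> (\<lambda>y. x * y) ` I \<in> \<I>) \<and>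
     (\<forall>I\<in>\<I>. \<exists>B. B \<in> sets borel \<and> B \<in> \<I> \<and> I \<subseteq> B) \<and>
     (\<forall>A B. A \<in> sets borel \<longrightarrow> B \<in> sets borel \<longrightarrow> A \<notin> \<I> \<longrightarrow> B \<notin> \<I> \<longrightarrow>
        interior {a - b | a b. a \<in> A \<and> b \<in> B} \<noteq> {})"

definition luzin :: "real set set \<Rightarrow> real set \<Rightarrow> bool" where
  "luzin \<I> L \<longleftrightarrow> L \<approx> (UNIV :: real set) \<and> (\<forall>I\<in>\<I>. countable (L \<inter> I))"

fun msum :: "nat \<Rightarrow> real set \<Rightarrow> real set" where
  "msum 0 L = {0}"
| "msum (Suc n) L = {a + b | a b. a \<in> L \<and> b \<in> msum n L}"

end

theory Submission
  imports Defs
begin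

text \<open>Under CH, enumerate \<open>\<real>\<close> in order type \<open>\<omega>\<^sub>1\<close>, so that every point has only countably
  many predecessors, and let \<open>C\<^sub>x\<close> be the union of the (continuum many) Borel members of the ideal
  enumerated up to \<open>x\<close>. At stage \<open>x\<close> split \<open>x\<close> into \<open>n + 1\<close> new summands such that neither
  they nor any \<open>n\<close>-fold sum they newly create lies in \<open>C\<^sub>x\<close>. This is possible because the bad
  choices form a countable union of translated and dilated copies of \<open>C\<^sub>x\<close>, which is still in
  the ideal. The union \<open>L\<close> of all summands has \<open>(n+1)\<close>-fold sum \<open>\<real>\<close>, while \<open>L\<close> and its \<open>n\<close>-fold
  sum meet each ideal set only in points created at countably many earlier stages.\<close>

section \<open>Cardinality of the Borel sets\<close>

datatype bcode = BEmpty | BBasic nat | BCompl bcode | BUnion "nat \<Rightarrow> bcode"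

primrec bcode_interp :: "(nat \<Rightarrow> 'a set) \<Rightarrow> bcode \<Rightarrow> 'a set" where
  "bcode_interp b BEmpty = {}"
| "bcode_interp b (BBasic k) = b k"
| "bcode_interp b (BCompl t) = UNIV - bcode_interp b t"
| "bcode_interp b (BUnion f) = (\<Union>i. bcode_interp b (f i))"

text \<open>A code read as a labelled tree: the label at the end of each path of child indices
  (paths leaving the tree get label 0).\<close>
primrec bcode_tree :: "bcode \<Rightarrow> nat list \<Rightarrow> nat" where
  "bcode_tree BEmpty = (\<lambda>p. case p of [] \<Rightarrow> 1 | _ \<Rightarrow> 0)"
| "bcode_tree (BBasic k) = (\<lambda>p. case p of [] \<Rightarrow> k + 4 | _ \<Rightarrow> 0)"
| "bcode_tree (BCompl t) = (\<lambda>p. case p of [] \<Rightarrow> 2 | i # q \<Rightarrow> bcode_tree t q)"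
| "bcode_tree (BUnion f) = (\<lambda>p. case p of [] \<Rightarrow> 3 | i # q \<Rightarrow> bcode_tree (f i) q)"

lemma bcode_tree_inject: "bcode_tree t = bcode_tree t' \<Longrightarrow> t = t'"
proof (induction t arbitrary: t')
  case BEmpty
  then have "bcode_tree t' [] = 1" by (metis bcode_tree.simps(1) list.simps(4))
  then show ?case by (cases t') auto
next
  case (BBasic k)
  then have "bcode_tree t' [] = k + 4" by (metis bcode_tree.simps(2) list.simps(4))
  then show ?case using BBasic by (cases t') auto
next
  case (BCompl t)
  then have root: "bcode_tree t' [] = 2" by (metis bcode_tree.simps(3) list.simps(4))
  show ?case
  proof (cases t')
    case (BCompl u)
    have "bcode_tree t q = bcode_tree u q" for q
      using fun_cong[OF BCompl.prems, of "0 # q"] \<open>t' = BCompl u\<close> by simp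
    then have "bcode_tree t = bcode_tree u" by (rule ext)
    with BCompl.IH show ?thesis using \<open>t' = BCompl u\<close> by simp
  qed (use root in auto)
next
  case (BUnion f)
  then have root: "bcode_tree t' [] = 3" by (metis bcode_tree.simps(4) list.simps(4))
  show ?case
  proof (cases t')
    case (BUnion g)
    have "f i = g i" for i
    proof -
      have "bcode_tree (f i) q = bcode_tree (g i) q" for q
        using fun_cong[OF BUnion.prems, of "i # q"] \<open>t' = BUnion g\<close> by simp
      then have "bcode_tree (f i) = bcode_tree (g i)" by (rule ext)
      then show ?thesis using BUnion.IH by blast
    qed
    then show ?thesis using \<open>t' = BUnion g\<close> by auto
  qed (use root in auto)
qed

lemma bcode_lepoll_reals: "(UNIV :: bcode set) \<lesssim> (UNIV :: real set)"
proof -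
  have "inj (\<lambda>t. to_nat ` {(p, bcode_tree t p) | p. True})"
  proof (rule injI)
    fix t t' assume "to_nat ` {(p, bcode_tree t p) | p. True} = to_nat ` {(p, bcode_tree t' p) | p. True}"
    then have "{(p, bcode_tree t p) | p. True} = {(p, bcode_tree t' p) | p. True}"
      by (simp add: inj_image_eq_iff)
    then have "bcode_tree t = bcode_tree t'" by (intro ext) blast
    then show "t = t'" by (rule bcode_tree_inject)
  qed
  then have "(UNIV :: bcode set) \<lesssim> (UNIV :: nat set set)"
    unfolding lepoll_def by blast
  also have "\<dots> \<approx> (UNIV :: real set)" by (rule nat_sets_eqpoll_reals)
  finally show ?thesis .
qed

lemma sigma_sets_subset_range_bcode_interp:
  "sigma_sets UNIV (range b) \<subseteq> range (bcode_interp b)"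
proof
  fix X assume "X \<in> sigma_sets UNIV (range b)"
  then show "X \<in> range (bcode_interp b)"
  proof induction
    case (Basic a)
    then obtain k where "a = bcode_interp b (BBasic k)" by auto
    then show ?case by blast
  next
    case Empty
    have "{} = bcode_interp b BEmpty" by simp
    then show ?case by blast
  next
    case (Compl a)
    then obtain t where "UNIV - a = bcode_interp b (BCompl t)" by auto
    then show ?case by blast
  next
    case (Union A)
    then have "\<forall>i. \<exists>t. A i = bcode_interp b t" by blast
    then obtain f where "\<And>i. A i = bcode_interp b (f i)" by metis
    then have "(\<Union>i. A i) = bcode_interp b (BUnion f)" by simp
    then show ?case by blast
  qed
qed

lemma borel_lepoll_reals:
  "sets (borel :: 'a::second_countable_topology measure) \<lesssim> (UNIV :: real set)"
proof -
  obtain B :: "'a set set" where B: "countable B" "topological_basis B"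
    using ex_countable_basis by blast
  have "B \<noteq> {}"
  proof
    assume "B = {}"
    then have "\<Union>B' = {}" if "B' \<subseteq> B" for B' using that by blast
    with B(2) show False unfolding topological_basis_def by (metis open_UNIV empty_not_UNIV)
  qed
  then have "range (from_nat_into B) = B" using B(1) by simp
  then have "sets (borel :: 'a measure) = sigma_sets UNIV (range (from_nat_into B))"
    by (simp add: borel_eq_countable_basis[OF B])
  also have "\<dots> \<subseteq> range (bcode_interp (from_nat_into B))"
    by (rule sigma_sets_subset_range_bcode_interp)
  finally have "sets (borel :: 'a measure) \<lesssim> (UNIV :: bcode set)"
    by (meson image_lepoll lepoll_trans subset_imp_lepoll)
  also have "\<dots> \<lesssim> (UNIV :: real set)" by (rule bcode_lepoll_reals)
  finally show ?thesis .
qed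

section \<open>An \<open>\<omega>\<^sub>1\<close>-like order of the reals and recursion along it\<close>

lemma exists_strict_well_order: "\<exists>S :: 'a rel. wf S \<and> trans S \<and> total S"
proof -
  obtain W :: "'a rel" where W: "Well_order W" "Field W = UNIV"
    using well_ordering[where 'a='a] by blast
  then have "wf (W - Id)" "trans (W - Id)" "total (W - Id)"
    by (auto simp: order_on_defs total_on_def trans_diff_Id)
  then show ?thesis by blast
qed

text \<open>Cut a strict well-order of \<open>\<real>\<close> at its first point with uncountably many predecessors;
  by CH that initial segment is equipotent to \<open>\<real>\<close>, and we transport the order back along a
  bijection.\<close>
lemma CH_imp_omega1_order:
  assumes "CH"
  obtains R :: "real rel" where "wf R" "trans R" "total R" "\<And>x. countable {y. (y, x) \<in> R}"
proof -
  obtain S :: "real rel" where S: "wf S" "trans S" "total S"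
    using exists_strict_well_order by blast
  show ?thesis
  proof (cases "\<forall>x. countable {y. (y, x) \<in> S}")
    case True
    with S show ?thesis by (intro that) blast+
  next
    case False
    then have "{x. \<not> countable {y. (y, x) \<in> S}} \<noteq> {}" by blast
    then obtain x0 where x0: "\<not> countable {y. (y, x0) \<in> S}"
      and min: "\<And>y. (y, x0) \<in> S \<Longrightarrow> countable {z. (z, y) \<in> S}"
      by (rule wfE_min'[OF S(1)]) blast
    obtain h where h: "bij_betw h (UNIV :: real set) {y. (y, x0) \<in> S}"
      using x0 assms unfolding CH_def by (meson eqpoll_def eqpoll_sym)
    define R where "R = inv_image S h"
    have "inj h" using h by (rule bij_betw_imp_inj_on)
    have "wf R" "trans R"
      unfolding R_def using S by (simp_all add: trans_inv_image)
    moreover have "total R"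
      unfolding R_def total_on_def
    proof (intro ballI impI)
      fix x y :: real assume "x \<noteq> y"
      then have "h x \<noteq> h y" using \<open>inj h\<close> by (simp add: inj_eq)
      then show "(x, y) \<in> inv_image S h \<or> (y, x) \<in> inv_image S h"
        using S(3) unfolding total_on_def by simp
    qed
    moreover have "countable {y. (y, x) \<in> R}" for x
    proof -
      have "h x \<in> {y. (y, x0) \<in> S}" using h by (meson UNIV_I bij_betwE)
      then have "countable {y. (y, h x) \<in> S}" using min by blast
      moreover have "h ` {y. (y, x) \<in> R} \<subseteq> {y. (y, h x) \<in> S}" unfolding R_def by auto
      ultimately have "countable (h ` {y. (y, x) \<in> R})" by (rule countable_subset[rotated])
      then show ?thesis
        using \<open>inj h\<close> by (simp add: countable_image_inj_eq inj_on_subset)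
    qed
    ultimately show ?thesis by (rule that)
  qed
qed

lemma wf_recursive_choice:
  assumes "wf R"
    and exists: "\<And>g x. \<exists>a. G g x a"
    and local: "\<And>f g x. (\<And>z. (z, x) \<in> R \<Longrightarrow> f z = g z) \<Longrightarrow> G f x = G g x"
  shows "\<exists>F. \<forall>x. G F x (F x)"
proof -
  define H where "H g x = (SOME a. G g x a)" for g x
  have "adm_wf R H"
    unfolding adm_wf_def H_def using local by metis
  then have F: "wfrec R H = H (wfrec R H)" by (rule wfrec_fixpoint[OF \<open>wf R\<close>])
  have "G (wfrec R H) x (wfrec R H x)" for x
    by (subst F) (simp add: H_def someI_ex[OF exists])
  then show ?thesis by blast
qed

section \<open>Minkowski sums\<close>

lemma msum_mono: "A \<subseteq> B \<Longrightarrow> msum m A \<subseteq> msum m B"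
  by (induction m) auto

lemma countable_msum: "countable A \<Longrightarrow> countable (msum m A)"
proof (induction m)
  case (Suc m)
  have "msum (Suc m) A = (\<lambda>(a, b). a + b) ` (A \<times> msum m A)" by auto
  then show ?case using Suc by simp
qed simp

lemma sum_mem_msum: "(\<And>i. i < m \<Longrightarrow> a i \<in> A) \<Longrightarrow> (\<Sum>i<m. a i) \<in> msum m A"
  by (induction m) (auto simp: add.commute)

lemma add_multiple_mem_msum:
  assumes "l \<in> L" "a \<in> L"
  shows "l + real m * a \<in> msum (Suc m) L"
proof (induction m)
  case (Suc m)
  have "l + real (Suc m) * a = a + (l + real m * a)" by (simp add: algebra_simps)
  with Suc assms(2) msum.simps(2)[of "Suc m" L] show ?case by blast
qed (use assms(1) in simp)

lemma uncountable_msum: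
  assumes "\<not> countable L" "n \<ge> 1"
  shows "\<not> countable (msum n L)"
proof
  assume countable: "countable (msum n L)"
  obtain m where n: "n = Suc m" using assms(2) by (cases n) auto
  obtain a where a: "a \<in> L" using assms(1) by fastforce
  have "L \<subseteq> (\<lambda>s. s - real m * a) ` msum n L"
  proof
    fix l assume "l \<in> L"
    then have "l + real m * a \<in> msum n L" using add_multiple_mem_msum[OF _ a] n by blast
    then show "l \<in> (\<lambda>s. s - real m * a) ` msum n L" by force
  qed
  with countable assms(1) show False by (meson countable_image countable_subset)
qed

lemma msum_Union_directed:
  assumes directed: "\<And>x y. x \<in> J \<Longrightarrow> y \<in> J \<Longrightarrow> \<exists>z\<in>J. S x \<subseteq> S z \<and> S y \<subseteq> S z"
  shows "msum (Suc m) (\<Union> (S ` J)) \<subseteq> (\<Union>z\<in>J. msum (Suc m) (S z))"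
proof (induction m)
  case (Suc m)
  show ?case
  proof
    fix s assume "s \<in> msum (Suc (Suc m)) (\<Union> (S ` J))"
    then obtain a b where s: "s = a + b" and a: "a \<in> \<Union> (S ` J)"
      and b: "b \<in> msum (Suc m) (\<Union> (S ` J))"
      using msum.simps(2)[of "Suc m" "\<Union> (S ` J)"] by blast
    obtain x where x: "x \<in> J" "a \<in> S x" using a by auto
    obtain y where y: "y \<in> J" "b \<in> msum (Suc m) (S y)" using Suc.IH b by blast
    obtain z where z: "z \<in> J" "S x \<subseteq> S z" "S y \<subseteq> S z" using directed[OF x(1) y(1)] by blast
    have "b \<in> msum (Suc m) (S z)" using msum_mono[OF z(3)] y(2) by blast
    then have "s \<in> msum (Suc (Suc m)) (S z)" using s x(2) z(2) msum.simps(2)[of "Suc m" "S z"] by blast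
    then show "s \<in> (\<Union>z\<in>J. msum (Suc (Suc m)) (S z))" using z(1) by blast
  qed
qed auto

lemma msum_Un_image_decomp:
  fixes a :: "nat \<Rightarrow> real"
  assumes "s \<in> msum m (P \<union> a ` {..n})"
  shows "\<exists>p k. sum k {..n} \<le> m \<and> p \<in> msum (m - sum k {..n}) P \<and>
           s = p + (\<Sum>i\<le>n. real (k i) * a i)"
  using assms
proof (induction m arbitrary: s)
  case 0
  then show ?case by (intro exI[of _ 0] exI[of _ "\<lambda>_. 0"]) simp
next
  case (Suc m)
  then obtain u v where s: "s = u + v" and u: "u \<in> P \<union> a ` {..n}"
    and v: "v \<in> msum m (P \<union> a ` {..n})"
    by auto
  obtain p k where k: "sum k {..n} \<le> m" and p: "p \<in> msum (m - sum k {..n}) P"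
    and v_eq: "v = p + (\<Sum>i\<le>n. real (k i) * a i)"
    using Suc.IH[OF v] by blast
  show ?case
  proof (cases "u \<in> P")
    case True
    have "u + p \<in> msum (Suc m - sum k {..n}) P"
      using True p k by (simp add: Suc_diff_le) blast
    moreover have "s = (u + p) + (\<Sum>i\<le>n. real (k i) * a i)" using s v_eq by simp
    ultimately show ?thesis using k by (intro exI[of _ "u + p"] exI[of _ k]) simp
  next
    case False
    then obtain j where j: "j \<le> n" "u = a j" using u by blast
    define k' where "k' i = k i + (if i = j then 1 else 0)" for i
    have "sum k' {..n} = Suc (sum k {..n})"
      unfolding k'_def using j(1) by (simp add: sum.distrib)
    moreover have "(\<Sum>i\<le>n. real (k' i) * a i) = (\<Sum>i\<le>n. real (k i) * a i) + a j"
      unfolding k'_def using j(1)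
      by (simp add: distrib_right sum.distrib if_distrib[of real] if_distrib[of "\<lambda>x. x * _"]
               cong: if_cong)
    ultimately show ?thesis
      using s v_eq j(2) k p by (intro exI[of _ p] exI[of _ k']) simp
  qed
qed

lemma exists_ne_last_of_sum_le:
  fixes k :: "nat \<Rightarrow> nat"
  assumes "0 < sum k {..n}" "sum k {..n} \<le> n"
  shows "\<exists>i<n. k i \<noteq> k n"
proof (rule ccontr)
  assume "\<not> (\<exists>i<n. k i \<noteq> k n)"
  then have "sum k {..n} = sum (\<lambda>_. k n) {..n}"
    by (intro sum.cong) (auto simp: le_less)
  then have "sum k {..n} = Suc n * k n" by simp
  with assms show False by (cases "k n") auto
qed

section \<open>The extension step\<close>

definition avoiding_extension :: "nat \<Rightarrow> real set \<Rightarrow> real set \<Rightarrow> real \<Rightarrow> (nat \<Rightarrow> real) \<Rightarrow> bool"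
  where "avoiding_extension n C P x a \<longleftrightarrow>
    (\<Sum>i\<le>n. a i) = x \<and> a ` {..n} \<inter> C = {} \<and> (msum n (P \<union> a ` {..n}) - msum n P) \<inter> C = {}"

locale invariant_sigma_ideal =
  fixes \<I> :: "real set set"
  assumes sigma_ideal: "sigma_ideal \<I>"
    and UNIV_not_mem: "UNIV \<notin> \<I>"
    and translate_mem: "I \<in> \<I> \<Longrightarrow> (\<lambda>y. x + y) ` I \<in> \<I>"
    and scale_mem: "I \<in> \<I> \<Longrightarrow> (\<lambda>y. x * y) ` I \<in> \<I>"
begin

lemma empty_mem: "{} \<in> \<I>"
  using sigma_ideal unfolding sigma_ideal_def by blast

lemma Union_mem: "countable F \<Longrightarrow> F \<subseteq> \<I> \<Longrightarrow> \<Union>F \<in> \<I>"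
  using sigma_ideal unfolding sigma_ideal_def by blast

text \<open>The set of bad \<open>b\<close> is a countable union of the ideal sets \<open>(C - h) / c\<close>.\<close>
lemma exists_avoiding_multiples:
  assumes "countable H" "C \<in> \<I>"
  shows "\<exists>b. \<forall>c::int. c \<noteq> 0 \<longrightarrow> (\<forall>h\<in>H. h + of_int c * b \<notin> C)"
proof -
  define G where "G c h = (\<lambda>y. (1 / of_int c) * y) ` ((\<lambda>y. - h + y) ` C)" for c :: int and h
  define E where "E = (\<Union>(c, h) \<in> (UNIV - {0}) \<times> H. G c h)"
  have "G c h \<in> \<I>" for c h
    unfolding G_def using assms(2) by (intro scale_mem translate_mem)
  then have "E \<in> \<I>"
    unfolding E_def using assms(1) by (intro Union_mem countable_image) auto
  then have "E \<noteq> UNIV" using UNIV_not_mem by auto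
  then obtain b where b: "b \<notin> E" by auto
  have "h + of_int c * b \<notin> C" if "c \<noteq> 0" "h \<in> H" for c h
  proof
    assume "h + of_int c * b \<in> C"
    moreover have "b = (1 / of_int c) * (- h + (h + of_int c * b))" using that(1) by simp
    ultimately show False using b that unfolding E_def G_def by blast
  qed
  then show ?thesis by blast
qed

lemma exists_avoiding_combinations:
  assumes "countable H" "C \<in> \<I>"
  shows "\<exists>a. \<forall>k::nat \<Rightarrow> int. (\<exists>i<j. k i \<noteq> 0) \<longrightarrow> (\<forall>h\<in>H. h + (\<Sum>i<j. of_int (k i) * a i) \<notin> C)"
  using assms(1)
proof (induction j arbitrary: H)
  case (Suc j)
  obtain b where b: "\<And>c h. c \<noteq> 0 \<Longrightarrow> h \<in> H \<Longrightarrow> h + of_int c * b \<notin> C"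
    using exists_avoiding_multiples[OF Suc.prems assms(2)] by blast
  define H' where "H' = (\<lambda>(h, c::int). h + of_int c * b) ` (H \<times> UNIV)"
  have "countable H'" unfolding H'_def using Suc.prems by simp
  from Suc.IH[OF this] obtain a where
    "\<forall>k::nat \<Rightarrow> int. (\<exists>i<j. k i \<noteq> 0) \<longrightarrow> (\<forall>h\<in>H'. h + (\<Sum>i<j. of_int (k i) * a i) \<notin> C)" ..
  then have a: "\<And>k h. \<exists>i<j. k i \<noteq> 0 \<Longrightarrow> h \<in> H' \<Longrightarrow> h + (\<Sum>i<j. of_int (k i) * a i) \<notin> C"
    by blast
  have "h + (\<Sum>i<Suc j. of_int (k i) * case_nat b a i) \<notin> C"
    if k: "\<exists>i<Suc j. k i \<noteq> 0" and h: "h \<in> H" for k h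
  proof -
    have split: "h + (\<Sum>i<Suc j. of_int (k i) * case_nat b a i)
        = (h + of_int (k 0) * b) + (\<Sum>i<j. of_int (k (Suc i)) * a i)"
      by (subst sum.lessThan_Suc_shift) (simp add: add.assoc)
    show ?thesis
    proof (cases "\<exists>i<j. k (Suc i) \<noteq> 0")
      case True
      moreover have "h + of_int (k 0) * b \<in> H'" unfolding H'_def using h by force
      ultimately show ?thesis unfolding split by (rule a)
    next
      case False
      then have "k 0 \<noteq> 0" using k by (metis less_Suc_eq_0_disj)
      with False b[OF _ h] show ?thesis unfolding split by simp
    qed
  qed
  then show ?case by blast
qed simp

text \<open>Choose \<open>a\<^sub>0, \<dots>, a\<^sub>n\<^sub>-\<^sub>1\<close> so that no nontrivial integer combination of them, shifted by a sum
  from \<open>P\<close> and an integer multiple of \<open>x\<close>, lies in \<open>C\<close>; put \<open>a\<^sub>n = x - \<Sum>a\<^sub>i\<close>. A new \<open>n\<close>-fold sum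
  uses the \<open>a\<^sub>i\<close> with multiplicities \<open>k\<^sub>i\<close> of total \<open>1..n\<close>, so the \<open>k\<^sub>i - k\<^sub>n\<close> are not all zero.\<close>
lemma avoiding_extension_exists:
  assumes "countable P" "C \<in> \<I>" "n \<ge> 1"
  shows "\<exists>a. avoiding_extension n C P x a"
proof -
  define H where "H = (\<lambda>(p, c::int). p + of_int c * x) ` ((\<Union>m. msum m P) \<times> UNIV)"
  have "countable (\<Union>m. msum m P)" using assms(1) by (simp add: countable_msum)
  then have "countable H" unfolding H_def by (intro countable_image countable_SIGMA) simp_all
  from exists_avoiding_combinations[OF this assms(2)] obtain a where
    "\<forall>k::nat \<Rightarrow> int. (\<exists>i<n. k i \<noteq> 0) \<longrightarrow> (\<forall>h\<in>H. h + (\<Sum>i<n. of_int (k i) * a i) \<notin> C)" ..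
  then have a: "\<And>k h. \<exists>i<n. k i \<noteq> 0 \<Longrightarrow> h \<in> H \<Longrightarrow> h + (\<Sum>i<n. of_int (k i) * a i) \<notin> C"
    by blast
  define a' where "a' i = (if i < n then a i else x - (\<Sum>i<n. a i))" for i
  have split: "(\<Sum>i\<le>n. f i) = (\<Sum>i<n. f i) + f n" for f :: "nat \<Rightarrow> real"
    by (simp add: lessThan_Suc_atMost[symmetric])
  have avoid: "p + (\<Sum>i\<le>n. real (k i) * a' i) \<notin> C"
    if p: "p \<in> msum m P" and k: "0 < sum k {..n}" "sum k {..n} \<le> n" for p m k
  proof -
    define K where "K i = int (k i) - int (k n)" for i
    have "\<exists>i<n. K i \<noteq> 0" unfolding K_def using exists_ne_last_of_sum_le[OF k] by simp
    moreover have "p + of_int (int (k n)) * x \<in> H"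
      unfolding H_def using p by (intro image_eqI[of _ _ "(p, int (k n))"]) auto
    ultimately have not_in_C: "(p + of_int (int (k n)) * x) + (\<Sum>i<n. of_int (K i) * a i) \<notin> C"
      by (rule a)
    have "(\<Sum>i\<le>n. real (k i) * a' i) = (\<Sum>i<n. real (k i) * a i) + real (k n) * (x - (\<Sum>i<n. a i))"
      unfolding split a'_def by simp
    also have "\<dots> = of_int (int (k n)) * x + (\<Sum>i<n. of_int (K i) * a i)"
      unfolding K_def by (simp add: algebra_simps sum_distrib_left sum_subtractf)
    finally show ?thesis using not_in_C by (simp add: add.assoc)
  qed
  have "(\<Sum>i\<le>n. a' i) = x" unfolding split a'_def by simp
  moreover have "a' j \<notin> C" if "j \<le> n" for j
  proof -
    have "0 + (\<Sum>i\<le>n. real (if i = j then 1 else 0) * a' i) \<notin> C"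
      by (rule avoid[of 0 0]) (use that assms(3) in auto)
    moreover have "(\<Sum>i\<le>n. real (if i = j then 1 else 0) * a' i) = (\<Sum>i\<le>n. if i = j then a' i else 0)"
      by (rule sum.cong) auto
    ultimately show ?thesis using that by simp
  qed
  moreover have "s \<notin> C" if s: "s \<in> msum n (P \<union> a' ` {..n})" "s \<notin> msum n P" for s
  proof -
    obtain p k where k: "sum k {..n} \<le> n" and p: "p \<in> msum (n - sum k {..n}) P"
      and s_eq: "s = p + (\<Sum>i\<le>n. real (k i) * a' i)"
      using msum_Un_image_decomp[OF s(1)] by blast
    have "0 < sum k {..n}"
    proof (rule gr0I)
      assume "sum k {..n} = 0"
      then have "\<forall>i\<le>n. k i = 0" by simp
      then show False using s p s_eq by simp
    qed
    from avoid[OF p this k] show ?thesis unfolding s_eq .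
  qed
  ultimately show ?thesis unfolding avoiding_extension_def by blast
qed

end

lemma standing_ideal_invariant: "standing_ideal \<I> \<Longrightarrow> invariant_sigma_ideal \<I>"
  by unfold_locales (simp_all add: standing_ideal_def)

lemma standing_ideal_cofinal_enumeration:
  assumes "standing_ideal \<I>"
  obtains B :: "real \<Rightarrow> real set" where "range B \<subseteq> \<I>" "\<And>I. I \<in> \<I> \<Longrightarrow> \<exists>y. I \<subseteq> B y"
proof -
  interpret invariant_sigma_ideal \<I> using assms by (rule standing_ideal_invariant)
  obtain g :: "real \<Rightarrow> real set" where g: "sets borel \<subseteq> range g"
    using borel_lepoll_reals unfolding lepoll_iff by blast
  define B where "B y = (if g y \<in> \<I> then g y else {})" for y
  have "range B \<subseteq> \<I>" unfolding B_def using empty_mem by auto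
  moreover have "\<exists>y. I \<subseteq> B y" if "I \<in> \<I>" for I
  proof -
    have "\<forall>I\<in>\<I>. \<exists>D. D \<in> sets borel \<and> D \<in> \<I> \<and> I \<subseteq> D"
      using assms unfolding standing_ideal_def by (elim conjE)
    then obtain D where D: "D \<in> sets borel" "D \<in> \<I>" "I \<subseteq> D"
      using \<open>I \<in> \<I>\<close> by blast
    then obtain y where "D = g y" using g by blast
    with D show ?thesis unfolding B_def by auto
  qed
  ultimately show ?thesis by (rule that)
qed

section \<open>The transfinite construction\<close>

definition points_below :: "'a rel \<Rightarrow> nat \<Rightarrow> ('a \<Rightarrow> nat \<Rightarrow> 'b) \<Rightarrow> 'a \<Rightarrow> 'b set"
  where "points_below R n F x = (\<Union>z\<in>{z. (z, x) \<in> R}. F z ` {..n})"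

lemma countable_points_below:
  "countable {z. (z, x) \<in> R} \<Longrightarrow> countable (points_below R n F x)"
  unfolding points_below_def by (intro countable_UN) auto

lemma luzin_if_covered:
  assumes "CH" "\<not> countable L" "\<And>y. countable (L \<inter> C y)" "\<And>I. I \<in> \<I> \<Longrightarrow> \<exists>y. I \<subseteq> C y"
  shows "luzin \<I> L"
  unfolding luzin_def
proof
  show "L \<approx> (UNIV :: real set)" using assms(1,2) unfolding CH_def by blast
  show "\<forall>I\<in>\<I>. countable (L \<inter> I)"
    using assms(3,4) by (meson Int_mono countable_subset order_refl)
qed

text \<open>Stage \<open>x\<close> adds the summands \<open>F x 0, \<dots>, F x n\<close>, chosen against the ideal set \<open>C x\<close>.\<close>
locale luzin_tower =
  fixes R :: "real rel" and n :: nat and C :: "real \<Rightarrow> real set" and F :: "real \<Rightarrow> nat \<Rightarrow> real"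
  assumes wf: "wf R" and trans: "trans R" and total: "total R"
    and countable_segment: "countable {y. (y, x) \<in> R}"
    and C_mono: "(y, x) \<in> R \<Longrightarrow> C y \<subseteq> C x"
    and extension: "avoiding_extension n (C x) (points_below R n F x) x (F x)"
begin

definition points_upto :: "real \<Rightarrow> real set"
  where "points_upto x = points_below R n F x \<union> F x ` {..n}"

definition points :: "real set"
  where "points = (\<Union>x. F x ` {..n})"

lemma sum_F: "(\<Sum>i\<le>n. F x i) = x"
  using extension unfolding avoiding_extension_def by blast

lemma F_not_in_C: "i \<le> n \<Longrightarrow> F x i \<notin> C x"
  using extension unfolding avoiding_extension_def by blast

lemma new_sum_not_in_C:
  "s \<in> msum n (points_upto x) \<Longrightarrow> s \<notin> msum n (points_below R n F x) \<Longrightarrow> s \<notin> C x"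
  using extension unfolding avoiding_extension_def points_upto_def by blast

lemma not_below_imp_eq_or_above: "(x, y) \<notin> R \<Longrightarrow> y = x \<or> (y, x) \<in> R"
  using total unfolding total_on_def by blast

lemma C_subset_if_not_below: "(x, y) \<notin> R \<Longrightarrow> C y \<subseteq> C x"
  using not_below_imp_eq_or_above C_mono by blast

lemma points_upto_subset_below: "(x, y) \<in> R \<Longrightarrow> points_upto x \<subseteq> points_below R n F y"
  unfolding points_upto_def points_below_def using trans by (blast dest: transD)

lemma points_upto_mono: "(x, y) \<in> R \<Longrightarrow> points_upto x \<subseteq> points_upto y"
  using points_upto_subset_below unfolding points_upto_def[of y] by blast

lemma points_upto_directed:
  assumes "x \<in> J" "y \<in> J"
  shows "\<exists>z\<in>J. points_upto x \<subseteq> points_upto z \<and> points_upto y \<subseteq> points_upto z"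
proof (cases "(x, y) \<in> R")
  case True
  with assms show ?thesis using points_upto_mono by blast
next
  case False
  then have "y = x \<or> (y, x) \<in> R" by (rule not_below_imp_eq_or_above)
  with assms show ?thesis using points_upto_mono by blast
qed

lemma points_eq_Union_upto: "points = (\<Union>x. points_upto x)"
  unfolding points_def points_upto_def points_below_def by blast

lemma points_below_eq_Union_upto:
  "points_below R n F x = (\<Union>z\<in>{z. (z, x) \<in> R}. points_upto z)"
  using points_upto_subset_below unfolding points_upto_def[abs_def] points_below_def by blast

lemma msum_Suc_points: "msum (Suc n) points = UNIV"
proof -
  have "x \<in> msum (Suc n) points" for x
  proof -
    have "(\<Sum>i<Suc n. F x i) \<in> msum (Suc n) points"
      by (rule sum_mem_msum) (auto simp: points_def less_Suc_eq_le)
    then show ?thesis by (simp add: lessThan_Suc_atMost sum_F)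
  qed
  then show ?thesis by blast
qed

lemma points_Int_C_subset: "points \<inter> C y \<subseteq> points_below R n F y"
proof
  fix l assume l: "l \<in> points \<inter> C y"
  then obtain x i where i: "i \<le> n" and l_eq: "l = F x i" unfolding points_def by blast
  have "(x, y) \<in> R"
  proof (rule ccontr)
    assume "(x, y) \<notin> R"
    then have "C y \<subseteq> C x" by (rule C_subset_if_not_below)
    with l l_eq F_not_in_C[OF i] show False by blast
  qed
  then show "l \<in> points_below R n F y" unfolding points_below_def using i l_eq by blast
qed

text \<open>A sum in \<open>points \<inter> C y\<close> first appears at some stage \<open>x\<close>, and there it avoids \<open>C x\<close>;
  hence \<open>x\<close> precedes \<open>y\<close>.\<close>
lemma msum_points_Int_C_subset: "msum n points \<inter> C y \<subseteq> msum n (points_below R n F y)"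
proof (cases n)
  case (Suc m)
  have msum_upto: "s \<in> msum n (\<Union> (points_upto ` J)) \<Longrightarrow> \<exists>z\<in>J. s \<in> msum n (points_upto z)" for s J
    using msum_Union_directed[of J points_upto m] points_upto_directed Suc by blast
  show ?thesis
  proof
    fix s assume s: "s \<in> msum n points \<inter> C y"
    then have "{x. s \<in> msum n (points_upto x)} \<noteq> {}"
      using msum_upto[of s UNIV] unfolding points_eq_Union_upto by blast
    then obtain x where x: "s \<in> msum n (points_upto x)"
      and first: "\<And>z. (z, x) \<in> R \<Longrightarrow> s \<notin> msum n (points_upto z)"
      by (rule wfE_min'[OF wf]) blast
    have "s \<notin> msum n (points_below R n F x)"
      unfolding points_below_eq_Union_upto using msum_upto first by blast
    with x have "s \<notin> C x" by (rule new_sum_not_in_C)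
    have "(x, y) \<in> R"
    proof (rule ccontr)
      assume "(x, y) \<notin> R"
      then have "C y \<subseteq> C x" by (rule C_subset_if_not_below)
      with s \<open>s \<notin> C x\<close> show False by blast
    qed
    then show "s \<in> msum n (points_below R n F y)"
      using x msum_mono[OF points_upto_subset_below] by blast
  qed
qed simp

lemma countable_points_Int_C: "countable (points \<inter> C y)"
  using points_Int_C_subset countable_points_below[OF countable_segment]
  by (rule countable_subset)

lemma countable_msum_points_Int_C: "countable (msum n points \<inter> C y)"
  using msum_points_Int_C_subset countable_msum[OF countable_points_below[OF countable_segment]]
  by (rule countable_subset)

lemma uncountable_points: "\<not> countable points"
  using countable_msum[of points "Suc n"] msum_Suc_points uncountable_UNIV_real by auto

end

context invariant_sigma_ideal
begin

lemma monotone_cover: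
  assumes "trans R" "\<And>x. countable {y. (y, x) \<in> R}" "range B \<subseteq> \<I>"
  obtains C where "\<And>x. C x \<in> \<I>" "\<And>x y. (y, x) \<in> R \<Longrightarrow> C y \<subseteq> C x" "\<And>y. B y \<subseteq> C y"
proof -
  define C where "C y = \<Union> (B ` insert y {z. (z, y) \<in> R})" for y
  have "C x \<in> \<I>" for x
    unfolding C_def using assms(2,3) by (intro Union_mem) auto
  moreover have "C y \<subseteq> C x" if "(y, x) \<in> R" for x y
    unfolding C_def using that assms(1) by (blast dest: transD)
  moreover have "B y \<subseteq> C y" for y unfolding C_def by blast
  ultimately show ?thesis by (rule that)
qed

lemma luzin_tower_exists:
  assumes R: "wf R" "trans R" "total R" "\<And>x. countable {y. (y, x) \<in> R}"
    and C: "\<And>x. C x \<in> \<I>" "\<And>x y. (y, x) \<in> R \<Longrightarrow> C y \<subseteq> C x"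
    and "n \<ge> 1"
  shows "\<exists>F. luzin_tower R n C F"
proof -
  have "\<exists>F. \<forall>x. avoiding_extension n (C x) (points_below R n F x) x (F x)"
  proof (rule wf_recursive_choice[OF R(1)])
    show "\<exists>a. avoiding_extension n (C x) (points_below R n g x) x a" for g x
      using countable_points_below[OF R(4)] C(1) \<open>n \<ge> 1\<close> by (rule avoiding_extension_exists)
    show "avoiding_extension n (C x) (points_below R n f x) x = avoiding_extension n (C x) (points_below R n g x) x"
      if "\<And>z. (z, x) \<in> R \<Longrightarrow> f z = g z" for f g x
    proof -
      have "points_below R n f x = points_below R n g x"
        unfolding points_below_def using that by auto
      then show ?thesis by simp
    qed
  qed
  then obtain F where "\<And>x. avoiding_extension n (C x) (points_below R n F x) x (F x)" by blast
  then have "luzin_tower R n C F" by unfold_locales (use R C in auto)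
  then show ?thesis by blast
qed

end

theorem mainTheorem15:
  fixes \<I> :: "real set set" and n :: nat
  assumes "CH"
    and "standing_ideal \<I>"
    and "n \<ge> 1"
  shows "\<exists>L :: real set. luzin \<I> L \<and> luzin \<I> (msum n L) \<and> msum (Suc n) L = UNIV"
proof -
  interpret invariant_sigma_ideal \<I> using assms(2) by (rule standing_ideal_invariant)
  obtain R :: "real rel" where R: "wf R" "trans R" "total R" "\<And>x. countable {y. (y, x) \<in> R}"
    using CH_imp_omega1_order[OF assms(1)] by metis
  obtain B :: "real \<Rightarrow> real set" where B: "range B \<subseteq> \<I>" "\<And>I. I \<in> \<I> \<Longrightarrow> \<exists>y. I \<subseteq> B y"
    using standing_ideal_cofinal_enumeration[OF assms(2)] by metis
  obtain C where C: "\<And>x. C x \<in> \<I>" "\<And>x y. (y, x) \<in> R \<Longrightarrow> C y \<subseteq> C x" "\<And>y. B y \<subseteq> C y"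
    using monotone_cover[OF R(2,4) B(1)] by metis
  obtain F where "luzin_tower R n C F"
    using luzin_tower_exists[where C = C, OF R C(1,2) assms(3)] by blast
  then interpret luzin_tower R n C F .
  have cover: "\<exists>y. I \<subseteq> C y" if "I \<in> \<I>" for I
    using B(2)[OF that] C(3) by blast
  have "luzin \<I> points"
    using assms(1) uncountable_points countable_points_Int_C cover by (rule luzin_if_covered)
  moreover have "luzin \<I> (msum n points)"
    using assms(1) uncountable_msum[OF uncountable_points assms(3)] countable_msum_points_Int_C cover
    by (rule luzin_if_covered)
  ultimately show ?thesis using msum_Suc_points by blast
qed

end
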